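(* Let $k\ge2$ and $n\ge1$ be integers. A function $f:\mathcal{S}_k^n\to\mathbf{R}\cup\{\infty\}$ is $k$-submodular if and only if $f$ is submodular on the modular semilattice $\mathcal{S}_k^n$.
   Context: $\mathcal{S}_k$ is the $(k+1)$-element poset consisting of a minimum $0$ and $k$ pairwise incomparable elements covering $0$; $\mathcal{S}_k^n$ has the componentwise order (a modular semilattice; rank $r(p)=$ number of nonzero coordinates). For $p,q\in\mathcal{S}_k^n$: $(p\wedge q)_i=p_i$ if $p_i=q_i$ and $0$ otherwise; $(p\sqcup q)_i=p_i\vee q_i$ if $p_i,q_i$ are comparable (equal or one is $0$) and $0$ if $0\ne p_i\ne q_i\ne0$. $f$ is $k$-submodular if $f(p)+f(q)\ge f(p\wedge q)+f(p\sqcup q)$ for all $p,q$. Submodularity on a modular semilattice $\mathcal{L}$ (rank $r$): for $p,q$ let $I(p,q)$ be the elements on shortest $p$–$q$ paths of the covering graph; $r(u;p,q)=(r(u\wedge p)-r(p\wedge q),r(u\wedge q)-r(p\wedge q))$; $\mathcal{E}(p,q)$ the $u\in I(p,q)$ with $r(u;p,q)$ a componentwise-maximal extreme point of the convex hull $\mathrm{Conv}I(p,q)$; $C(u;p,q)=\{w\in\mathbf{R}^2_{\ge0}:\langle w,r(u;p,q)\rangle=\max_{z\in\mathrm{Conv}I(p,q)}\langle w,z\rangle\}=\{(x,y)\ge0:y\cos\alpha\le x\sin\alpha,\ y\cos\beta\ge x\sin\beta\}$ ($0\le\beta\le\alpha\le\pi/2$), $[C]=\frac{\sin\alpha}{\sin\alpha+\cos\alpha}-\frac{\sin\beta}{\sin\beta+\cos\beta}$.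 $f$ is submodular if $f(p)+f(q)\ge f(p\wedge q)+\sum_{u\in\mathcal{E}(p,q)}[C(u;p,q)]f(u)$ for all $p,q$ (zero-coefficient terms omitted; $a+\infty=\infty$). *)

theory Defs
  imports "HOL-Analysis.Analysis"
begin

text \<open>An element of S_k^n is a function nat => nat with coordinates i < n in {0..k}
  and all coordinates i >= n equal to 0 (canonical representative).\<close>

definition Skn :: "nat \<Rightarrow> nat \<Rightarrow> (nat \<Rightarrow> nat) set" where
  "Skn k n = {p. (\<forall>i<n. p i \<le> k) \<and> (\<forall>i\<ge>n. p i = 0)}"

definition Sle :: "(nat \<Rightarrow> nat) \<Rightarrow> (nat \<Rightarrow> nat) \<Rightarrow> bool" where
  "Sle p q \<longleftrightarrow> (\<forall>i. p i = 0 \<or> p i = q i)"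

definition Srank :: "nat \<Rightarrow> (nat \<Rightarrow> nat) \<Rightarrow> nat" where
  "Srank n p = card {i. i < n \<and> p i \<noteq> 0}"

definition kmeet :: "(nat \<Rightarrow> nat) \<Rightarrow> (nat \<Rightarrow> nat) \<Rightarrow> (nat \<Rightarrow> nat)" where
  "kmeet p q = (\<lambda>i. if p i = q i then p i else 0)"

definition kjoin :: "(nat \<Rightarrow> nat) \<Rightarrow> (nat \<Rightarrow> nat) \<Rightarrow> (nat \<Rightarrow> nat)" where
  "kjoin p q = (\<lambda>i. if p i = 0 then q i else if q i = 0 then p i
                    else if p i = q i then p i else 0)"

definition k_submodular :: "nat \<Rightarrow> nat \<Rightarrow> ((nat \<Rightarrow> nat) \<Rightarrow> ereal) \<Rightarrow> bool" where
  "k_submodular k n f \<longleftrightarrow>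
     (\<forall>p\<in>Skn k n. \<forall>q\<in>Skn k n. f p + f q \<ge> f (kmeet p q) + f (kjoin p q))"

definition glb :: "'a set \<Rightarrow> ('a \<Rightarrow> 'a \<Rightarrow> bool) \<Rightarrow> 'a \<Rightarrow> 'a \<Rightarrow> 'a" where
  "glb L le p q = (THE m. m \<in> L \<and> le m p \<and> le m q \<and>
                      (\<forall>x\<in>L. le x p \<and> le x q \<longrightarrow> le x m))"

definition covers :: "'a set \<Rightarrow> ('a \<Rightarrow> 'a \<Rightarrow> bool) \<Rightarrow> 'a \<Rightarrow> 'a \<Rightarrow> bool" where
  "covers L le a b \<longleftrightarrow> a \<in> L \<and> b \<in> L \<and> le a b \<and> a \<noteq> b \<and>
     \<not> (\<exists>c\<in>L. le a c \<and> le c b \<and> c \<noteq> a \<and> c \<noteq> b)"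

definition cg_path :: "'a set \<Rightarrow> ('a \<Rightarrow> 'a \<Rightarrow> bool) \<Rightarrow> 'a list \<Rightarrow> bool" where
  "cg_path L le xs \<longleftrightarrow> xs \<noteq> [] \<and> set xs \<subseteq> L \<and>
     (\<forall>i. Suc i < length xs \<longrightarrow>
        covers L le (xs ! i) (xs ! Suc i) \<or> covers L le (xs ! Suc i) (xs ! i))"

definition cg_dist :: "'a set \<Rightarrow> ('a \<Rightarrow> 'a \<Rightarrow> bool) \<Rightarrow> 'a \<Rightarrow> 'a \<Rightarrow> nat" where
  "cg_dist L le p q = (LEAST m. \<exists>xs. cg_path L le xs \<and> hd xs = p \<and> last xs = q
                                      \<and> length xs = Suc m)"

definition interval :: "'a set \<Rightarrow> ('a \<Rightarrow> 'a \<Rightarrow> bool) \<Rightarrow> 'a \<Rightarrow> 'a \<Rightarrow> 'a set" where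
  "interval L le p q = {u. \<exists>xs. cg_path L le xs \<and> hd xs = p \<and> last xs = q \<and>
        length xs = Suc (cg_dist L le p q) \<and> u \<in> set xs}"

definition rvec :: "'a set \<Rightarrow> ('a \<Rightarrow> 'a \<Rightarrow> bool) \<Rightarrow> ('a \<Rightarrow> nat) \<Rightarrow> 'a \<Rightarrow> 'a \<Rightarrow> 'a \<Rightarrow> real \<times> real"
  where
  "rvec L le r p q u =
     (real (r (glb L le u p)) - real (r (glb L le p q)),
      real (r (glb L le u q)) - real (r (glb L le p q)))"

definition convI :: "'a set \<Rightarrow> ('a \<Rightarrow> 'a \<Rightarrow> bool) \<Rightarrow> ('a \<Rightarrow> nat) \<Rightarrow> 'a \<Rightarrow> 'a \<Rightarrow> (real \<times> real) set"
  where
  "convI L le r p q = convex hull (rvec L le r p q ` interval L le p q)"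

definition Eset :: "'a set \<Rightarrow> ('a \<Rightarrow> 'a \<Rightarrow> bool) \<Rightarrow> ('a \<Rightarrow> nat) \<Rightarrow> 'a \<Rightarrow> 'a \<Rightarrow> 'a set" where
  "Eset L le r p q = {u \<in> interval L le p q.
      rvec L le r p q u extreme_point_of convI L le r p q \<and>
      \<not> (\<exists>z\<in>convI L le r p q. z \<noteq> rvec L le r p q u \<and>
            fst (rvec L le r p q u) \<le> fst z \<and> snd (rvec L le r p q u) \<le> snd z)}"

definition Ccone :: "'a set \<Rightarrow> ('a \<Rightarrow> 'a \<Rightarrow> bool) \<Rightarrow> ('a \<Rightarrow> nat) \<Rightarrow> 'a \<Rightarrow> 'a \<Rightarrow> 'a \<Rightarrow> (real \<times> real) set"
  where
  "Ccone L le r p q u = {w. fst w \<ge> 0 \<and> snd w \<ge> 0 \<and>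
      inner w (rvec L le r p q u) = (SUP z\<in>convI L le r p q. inner w z)}"

definition sector :: "real \<Rightarrow> real \<Rightarrow> (real \<times> real) set" where
  "sector \<alpha> \<beta> = {(x, y). x \<ge> 0 \<and> y \<ge> 0 \<and> y * cos \<alpha> \<le> x * sin \<alpha> \<and> y * cos \<beta> \<ge> x * sin \<beta>}"

definition cone_coef :: "(real \<times> real) set \<Rightarrow> real" where
  "cone_coef C = (case (THE (\<alpha>, \<beta>). 0 \<le> \<beta> \<and> \<beta> \<le> \<alpha> \<and> \<alpha> \<le> pi / 2 \<and> C = sector \<alpha> \<beta>) of
     (\<alpha>, \<beta>) \<Rightarrow> sin \<alpha> / (sin \<alpha> + cos \<alpha>) - sin \<beta> / (sin \<beta> + cos \<beta>))"

definition submodular_on :: "'a set \<Rightarrow> ('a \<Rightarrow> 'a \<Rightarrow> bool) \<Rightarrow> ('a \<Rightarrow> nat) \<Rightarrow> ('a \<Rightarrow> ereal) \<Rightarrow> bool"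
  where
  "submodular_on L le r f \<longleftrightarrow>
     (\<forall>p\<in>L. \<forall>q\<in>L. f p + f q \<ge> f (glb L le p q) +
        (\<Sum>u\<in>{u \<in> Eset L le r p q. cone_coef (Ccone L le r p q u) \<noteq> 0}.
            ereal (cone_coef (Ccone L le r p q u)) * f u))"

end

theory Submission
  imports Defs
begin

text \<open>In \<open>S\<^sub>k\<^sup>n\<close> the covering graph is a product of stars, so its distance is the sum of
  coordinatewise distances and \<open>I(p,q)\<close> can be described coordinatewise. Writing
  \<open>m = r(p \<sqinter> q)\<close>, every rank vector \<open>r(u;p,q)\<close> with \<open>u \<in> I(p,q)\<close> lies in the polygon
  \<open>x \<le> r(p) - m, y \<le> r(q) - m, x + y \<le> |supp p \<union> supp q| - m\<close>, and the two corners of its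
  edge \<open>x + y = const\<close> are attained exactly by the biased joins \<open>p \<squnion>\<^sub>p q\<close> (take \<open>p\<^sub>i\<close> when
  nonzero, else \<open>q\<^sub>i\<close>) and \<open>p \<squnion>\<^sub>q q\<close>. These are the maximal extreme points, hence
  \<open>E(p,q)\<close>. If \<open>p\<close> and \<open>q\<close> conflict (\<open>0 \<noteq> p\<^sub>i \<noteq> q\<^sub>i \<noteq> 0\<close> somewhere) the corners differ,
  their normal cones are the two halves of the quadrant and both coefficients are \<open>1/2\<close>;
  otherwise both biased joins equal \<open>p \<squnion> q\<close> with coefficient \<open>1\<close>. So submodularity reads
  \<open>f p + f q \<ge> f (p \<sqinter> q) + (f (p \<squnion>\<^sub>p q) + f (p \<squnion>\<^sub>q q)) / 2\<close>, which is the sum of three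
  instances of \<open>k\<close>-submodularity, and conversely implies it after adding the same inequality
  for the pair \<open>(p \<squnion>\<^sub>p q, p \<squnion>\<^sub>q q)\<close>, whose meet is \<open>p \<squnion> q\<close>.\<close>

section \<open>Coefficients of sectors\<close>

lemma sin_diff_nonneg_iff:
  assumes "0 \<le> \<theta>" "\<theta> \<le> pi/2" "0 \<le> \<alpha>" "\<alpha> \<le> pi/2"
  shows "0 \<le> sin (\<alpha> - \<theta>) \<longleftrightarrow> \<theta> \<le> \<alpha>"
proof
  assume nonneg: "0 \<le> sin (\<alpha> - \<theta>)"
  show "\<theta> \<le> \<alpha>"
  proof (rule ccontr)
    assume "\<not> \<theta> \<le> \<alpha>"
    then have "0 < sin (\<theta> - \<alpha>)"
      using assms by (intro sin_gt_zero) auto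
    moreover have "sin (\<alpha> - \<theta>) = - sin (\<theta> - \<alpha>)"
      by (metis minus_diff_eq sin_minus)
    ultimately show False
      using nonneg by linarith
  qed
next
  assume "\<theta> \<le> \<alpha>"
  then show "0 \<le> sin (\<alpha> - \<theta>)"
    using assms by (intro sin_ge_zero) auto
qed

lemma cos_sin_in_sector_iff:
  assumes "0 \<le> \<beta>" "\<beta> \<le> \<alpha>" "\<alpha> \<le> pi/2" "0 \<le> \<theta>" "\<theta> \<le> pi/2"
  shows "(cos \<theta>, sin \<theta>) \<in> sector \<alpha> \<beta> \<longleftrightarrow> \<beta> \<le> \<theta> \<and> \<theta> \<le> \<alpha>"
proof -
  have "cos \<theta> \<ge> 0" "sin \<theta> \<ge> 0"
    using assms by (auto intro!: cos_ge_zero sin_ge_zero)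
  moreover have "sin \<theta> * cos \<alpha> \<le> cos \<theta> * sin \<alpha> \<longleftrightarrow> 0 \<le> sin (\<alpha> - \<theta>)"
    by (simp add: sin_diff mult.commute)
  moreover have "cos \<theta> * sin \<beta> \<le> sin \<theta> * cos \<beta> \<longleftrightarrow> 0 \<le> sin (\<theta> - \<beta>)"
    by (simp add: sin_diff mult.commute)
  ultimately show ?thesis
    using assms sin_diff_nonneg_iff[of \<theta> \<alpha>] sin_diff_nonneg_iff[of \<beta> \<theta>]
    unfolding sector_def by auto
qed

lemma sector_inject:
  assumes "0 \<le> \<beta>" "\<beta> \<le> \<alpha>" "\<alpha> \<le> pi/2" "0 \<le> \<beta>'" "\<beta>' \<le> \<alpha>'" "\<alpha>' \<le> pi/2"
    and "sector \<alpha> \<beta> = sector \<alpha>' \<beta>'"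
  shows "\<alpha> = \<alpha>' \<and> \<beta> = \<beta>'"
proof -
  have "\<And>\<theta>. 0 \<le> \<theta> \<Longrightarrow> \<theta> \<le> pi/2 \<Longrightarrow> (\<beta> \<le> \<theta> \<and> \<theta> \<le> \<alpha>) = (\<beta>' \<le> \<theta> \<and> \<theta> \<le> \<alpha>')"
    using cos_sin_in_sector_iff[of \<beta> \<alpha>] cos_sin_in_sector_iff[of \<beta>' \<alpha>'] assms by metis
  from this[of \<alpha>] this[of \<alpha>'] this[of \<beta>] this[of \<beta>'] assms show ?thesis
    by auto
qed

lemma cone_coef_sector:
  assumes "0 \<le> \<beta>" "\<beta> \<le> \<alpha>" "\<alpha> \<le> pi/2"
  shows "cone_coef (sector \<alpha> \<beta>) = sin \<alpha> / (sin \<alpha> + cos \<alpha>) - sin \<beta> / (sin \<beta> + cos \<beta>)"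
proof -
  have "(THE (a, b). 0 \<le> b \<and> b \<le> a \<and> a \<le> pi / 2 \<and> sector \<alpha> \<beta> = sector a b) = (\<alpha>, \<beta>)"
    using assms sector_inject[of \<beta> \<alpha>] by (intro the_equality) auto
  then show ?thesis
    unfolding cone_coef_def by simp
qed

lemma cone_coef_lower_half:
  "cone_coef {w. 0 \<le> fst w \<and> 0 \<le> snd w \<and> snd w \<le> fst w} = 1/2"
proof -
  have "{w. 0 \<le> fst w \<and> 0 \<le> snd w \<and> snd w \<le> fst w} = sector (pi/4) 0"
    unfolding sector_def by (auto simp: sin_45 cos_45)
  then show ?thesis
    using cone_coef_sector[of 0 "pi/4"] by (simp add: sin_45 cos_45)
qed

lemma cone_coef_upper_half:
  "cone_coef {w. 0 \<le> fst w \<and> 0 \<le> snd w \<and> fst w \<le> snd w} = 1/2"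
proof -
  have "{w. 0 \<le> fst w \<and> 0 \<le> snd w \<and> fst w \<le> snd w} = sector (pi/2) (pi/4)"
    unfolding sector_def by (auto simp: sin_45 cos_45)
  then show ?thesis
    using cone_coef_sector[of "pi/4" "pi/2"] by (simp add: sin_45 cos_45)
qed

lemma cone_coef_quadrant: "cone_coef {w. 0 \<le> fst w \<and> 0 \<le> snd w} = 1"
proof -
  have "{w. 0 \<le> fst w \<and> 0 \<le> snd w} = sector (pi/2) 0"
    unfolding sector_def by auto
  then show ?thesis
    using cone_coef_sector[of 0 "pi/2"] by simp
qed

section \<open>Maximal extreme points and normal cones of a corner polygon\<close>

lemma antidiagonal_in_segment:
  fixes a b c x :: real
  assumes "c - b \<le> x" "x \<le> a" "c < a + b"
  shows "(x, c - x) \<in> closed_segment (c - b, b) (a, c - a)"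
proof -
  define u where "u = (x - (c - b)) / (a + b - c)"
  have "u * (a + b - c) = x - (c - b)"
    using assms by (simp add: u_def)
  then have "x = (1 - u) * (c - b) + u * a"
    by (simp add: algebra_simps)
  moreover have "0 \<le> u" "u \<le> 1"
    using assms by (auto simp: u_def field_simps)
  ultimately show ?thesis
    unfolding in_segment by (intro exI[of _ u]) (auto simp: algebra_simps)
qed

text \<open>\<open>V\<close> abstracts the set of rank vectors \<open>r(u;p,q)\<close>, \<open>u \<in> I(p,q)\<close>.\<close>

locale corner_polygon =
  fixes V :: "(real \<times> real) set" and a b c :: real
  assumes V_subset: "V \<subseteq> {z. fst z \<le> a \<and> snd z \<le> b \<and> fst z + snd z \<le> c}"
    and left_corner_in: "(a, c - a) \<in> V" and right_corner_in: "(c - b, b) \<in> V"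
    and corners_ordered: "c \<le> a + b"
begin

definition polygon :: "(real \<times> real) set" where
  "polygon = {z. fst z \<le> a \<and> snd z \<le> b \<and> fst z + snd z \<le> c}"

lemma convex_polygon: "convex polygon"
proof -
  have "polygon = {z. inner (1, 0) z \<le> a} \<inter> {z. inner (0, 1) z \<le> b} \<inter> {z. inner (1, 1) z \<le> c}"
    unfolding polygon_def by (auto simp: inner_prod_def)
  then show ?thesis
    by (simp add: convex_Int convex_halfspace_le)
qed

lemma hull_subset_polygon: "convex hull V \<subseteq> polygon"
  using V_subset convex_polygon by (intro hull_minimal) (auto simp: polygon_def)

lemma polygonD:
  "z \<in> convex hull V \<Longrightarrow> fst z \<le> a \<and> snd z \<le> b \<and> fst z + snd z \<le> c"
  using hull_subset_polygon by (auto simp: polygon_def)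

lemma left_corner_in_hull: "(a, c - a) \<in> convex hull V"
  using left_corner_in hull_inc by metis

lemma right_corner_in_hull: "(c - b, b) \<in> convex hull V"
  using right_corner_in hull_inc by metis

lemma left_corner_extreme: "(a, c - a) extreme_point_of convex hull V"
proof (rule extreme_point_of_Int_supporting_hyperplane_le[where a = "(2, 1)" and b = "a + c"])
  fix z assume "z \<in> convex hull V"
  from polygonD[OF this] show "inner (2, 1) z \<le> a + c"
    by (cases z) (auto simp: inner_prod_def)
next
  have "z = (a, c - a)" if "z \<in> convex hull V" "inner (2, 1) z = a + c" for z
    using polygonD[OF that(1)] that(2) by (cases z) (auto simp: inner_prod_def)
  moreover have "inner (2, 1) (a, c - a) = a + c"
    by (simp add: inner_prod_def algebra_simps)
  ultimately show "convex hull V \<inter> {z. inner (2, 1) z = a + c} = {(a, c - a)}"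
    using left_corner_in_hull by blast
qed

lemma right_corner_extreme: "(c - b, b) extreme_point_of convex hull V"
proof (rule extreme_point_of_Int_supporting_hyperplane_le[where a = "(1, 2)" and b = "b + c"])
  fix z assume "z \<in> convex hull V"
  from polygonD[OF this] show "inner (1, 2) z \<le> b + c"
    by (cases z) (auto simp: inner_prod_def)
next
  have "z = (c - b, b)" if "z \<in> convex hull V" "inner (1, 2) z = b + c" for z
    using polygonD[OF that(1)] that(2) by (cases z) (auto simp: inner_prod_def)
  moreover have "inner (1, 2) (c - b, b) = b + c"
    by (simp add: inner_prod_def algebra_simps)
  ultimately show "convex hull V \<inter> {z. inner (1, 2) z = b + c} = {(c - b, b)}"
    using right_corner_in_hull by blast
qed

definition maximal_extreme_point :: "real \<times> real \<Rightarrow> bool" where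
  "maximal_extreme_point z \<longleftrightarrow> z extreme_point_of convex hull V \<and>
     \<not> (\<exists>w\<in>convex hull V. w \<noteq> z \<and> fst z \<le> fst w \<and> snd z \<le> snd w)"

lemma maximal_extreme_point_iff:
  assumes "z \<in> convex hull V"
  shows "maximal_extreme_point z \<longleftrightarrow> z = (a, c - a) \<or> z = (c - b, b)"
proof
  assume "z = (a, c - a) \<or> z = (c - b, b)"
  then show "maximal_extreme_point z"
    unfolding maximal_extreme_point_def
    using left_corner_extreme right_corner_extreme polygonD by fastforce
next
  assume max: "maximal_extreme_point z"
  then have undominated: "w = z"
    if "w \<in> convex hull V" "fst z \<le> fst w" "snd z \<le> snd w" for w
    using that unfolding maximal_extreme_point_def by blast
  obtain x y where z: "z = (x, y)" by fastforce
  have bounds: "x \<le> a" "y \<le> b" "x + y \<le> c"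
    using polygonD[OF assms] z by auto
  show "z = (a, c - a) \<or> z = (c - b, b)"
  proof (rule ccontr)
    assume not_corner: "\<not> ?thesis"
    have "c - a < y"
      using undominated[OF left_corner_in_hull] not_corner bounds z by force
    moreover have "c - b < x"
      using undominated[OF right_corner_in_hull] not_corner bounds z by force
    ultimately have on_edge: "(x, c - x) \<in> closed_segment (c - b, b) (a, c - a)"
      using bounds by (intro antidiagonal_in_segment) auto
    moreover have "closed_segment (c - b, b) (a, c - a) \<subseteq> convex hull V"
      using left_corner_in_hull right_corner_in_hull
      by (simp add: closed_segment_subset convex_convex_hull)
    ultimately have "(x, c - x) = z"
      using undominated bounds z by auto
    then have "z \<in> open_segment (c - b, b) (a, c - a)"
      using on_edge not_corner by (auto simp: open_segment_def)
    then show False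
      using max left_corner_in_hull right_corner_in_hull
      unfolding maximal_extreme_point_def extreme_point_of_def by blast
  qed
qed

lemma SUP_inner_eq_iff:
  assumes "0 \<le> fst w" "0 \<le> snd w" "z \<in> convex hull V"
  shows "inner w z = (SUP y\<in>convex hull V. inner w y) \<longleftrightarrow> (\<forall>y\<in>convex hull V. inner w y \<le> inner w z)"
proof -
  have bdd: "bdd_above ((\<lambda>y. inner w y) ` (convex hull V))"
  proof (rule bdd_aboveI2)
    fix y assume "y \<in> convex hull V"
    then have "fst y \<le> a" "snd y \<le> b"
      using polygonD by auto
    then show "inner w y \<le> fst w * a + snd w * b"
      using assms by (cases w, cases y) (auto intro!: add_mono mult_left_mono)
  qed
  show ?thesis
  proof
    assume "inner w z = (SUP y\<in>convex hull V. inner w y)"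
    then show "\<forall>y\<in>convex hull V. inner w y \<le> inner w z"
      using cSUP_upper[OF _ bdd] by auto
  next
    assume "\<forall>y\<in>convex hull V. inner w y \<le> inner w z"
    then have "(SUP y\<in>convex hull V. inner w y) \<le> inner w z"
      using assms(3) by (intro cSUP_least) auto
    then show "inner w z = (SUP y\<in>convex hull V. inner w y)"
      using cSUP_upper[OF assms(3) bdd] by (intro antisym)
  qed
qed

lemma normal_cone_left_corner:
  "{w. 0 \<le> fst w \<and> 0 \<le> snd w \<and> inner w (a, c - a) = (SUP y\<in>convex hull V. inner w y)}
   = (if c < a + b then {w. 0 \<le> fst w \<and> 0 \<le> snd w \<and> snd w \<le> fst w} else {w. 0 \<le> fst w \<and> 0 \<le> snd w})"
proof -
  have "(\<forall>y\<in>convex hull V. inner w y \<le> inner w (a, c - a)) \<longleftrightarrow> (c < a + b \<longrightarrow> snd w \<le> fst w)"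
    if w: "0 \<le> fst w" "0 \<le> snd w" for w
  proof
    assume "\<forall>y\<in>convex hull V. inner w y \<le> inner w (a, c - a)"
    then have "fst w * (c - b) + snd w * b \<le> fst w * a + snd w * (c - a)"
      using right_corner_in_hull by (force simp: inner_prod_def)
    then have "snd w * (a + b - c) \<le> fst w * (a + b - c)"
      by (simp add: algebra_simps)
    then show "c < a + b \<longrightarrow> snd w \<le> fst w"
      by (simp add: mult_le_cancel_right)
  next
    assume slope: "c < a + b \<longrightarrow> snd w \<le> fst w"
    show "\<forall>y\<in>convex hull V. inner w y \<le> inner w (a, c - a)"
    proof
      fix y assume "y \<in> convex hull V"
      then have y: "fst y \<le> a" "snd y \<le> b" "fst y + snd y \<le> c"
        using polygonD by auto
      have "fst w * fst y + snd w * snd y \<le> fst w * a + snd w * (c - a)"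
      proof (cases "c < a + b")
        case True
        have "fst w * fst y + snd w * snd y = snd w * (fst y + snd y) + (fst w - snd w) * fst y"
          by (simp add: algebra_simps)
        also have "\<dots> \<le> snd w * c + (fst w - snd w) * a"
          using True slope w y by (intro add_mono mult_left_mono) auto
        finally show ?thesis
          by (simp add: algebra_simps)
      next
        case False
        then have "c - a = b"
          using corners_ordered by simp
        then show ?thesis
          using w y by (simp add: add_mono mult_left_mono)
      qed
      then show "inner w y \<le> inner w (a, c - a)"
        by (cases w, cases y) (simp add: inner_prod_def)
    qed
  qed
  then show ?thesis
    using SUP_inner_eq_iff[OF _ _ left_corner_in_hull] by auto
qed

end

lemma corner_polygon_swap:
  assumes "corner_polygon V a b c"
  shows "corner_polygon (prod.swap ` V) b a c"
  using assms unfolding corner_polygon_def by (auto simp: add.commute)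

lemma (in corner_polygon) normal_cone_right_corner:
  "{w. 0 \<le> fst w \<and> 0 \<le> snd w \<and> inner w (c - b, b) = (SUP y\<in>convex hull V. inner w y)}
   = (if c < a + b then {w. 0 \<le> fst w \<and> 0 \<le> snd w \<and> fst w \<le> snd w} else {w. 0 \<le> fst w \<and> 0 \<le> snd w})"
proof -
  interpret swapped: corner_polygon "prod.swap ` V" b a c
    using corner_polygon_swap corner_polygon_axioms by blast
  have "linear prod.swap"
    by (auto intro!: linearI)
  then have hull: "convex hull (prod.swap ` V) = prod.swap ` (convex hull V)"
    by (rule convex_hull_linear_image[symmetric])
  have inner_swap: "inner (prod.swap w) y = inner w (prod.swap y)" for w y :: "real \<times> real"
    by (cases w, cases y) (simp add: inner_prod_def add.commute)
  define cone where "cone W u = {w. 0 \<le> fst w \<and> 0 \<le> snd w \<and>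
    inner w u = (SUP y\<in>convex hull W. inner w y)}" for W and u :: "real \<times> real"
  have "w \<in> cone V (c - b, b) \<longleftrightarrow> prod.swap w \<in> cone (prod.swap ` V) (b, c - b)" for w
    by (auto simp: cone_def hull image_image inner_swap)
  moreover have "cone (prod.swap ` V) (b, c - b) =
      (if c < b + a then {w. 0 \<le> fst w \<and> 0 \<le> snd w \<and> snd w \<le> fst w} else {w. 0 \<le> fst w \<and> 0 \<le> snd w})"
    unfolding cone_def by (rule swapped.normal_cone_left_corner)
  ultimately show ?thesis
    unfolding cone_def[symmetric] by (auto simp: add.commute)
qed

section \<open>The covering graph of \<open>S\<^sub>k\<^sup>n\<close>\<close>

text \<open>The covering graph of \<open>S\<^sub>k\<close> is a star with centre \<open>0\<close>.\<close>

definition coord_dist :: "nat \<Rightarrow> nat \<Rightarrow> nat" where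
  "coord_dist x y = (if x = y then 0 else if x = 0 \<or> y = 0 then 1 else 2)"

definition cover_dist :: "nat \<Rightarrow> (nat \<Rightarrow> nat) \<Rightarrow> (nat \<Rightarrow> nat) \<Rightarrow> nat" where
  "cover_dist n p q = (\<Sum>i<n. coord_dist (p i) (q i))"

lemma coord_dist_commute: "coord_dist x y = coord_dist y x"
  by (auto simp: coord_dist_def)

lemma coord_dist_triangle: "coord_dist x z \<le> coord_dist x y + coord_dist y z"
  by (auto simp: coord_dist_def)

lemma cover_dist_commute: "cover_dist n p q = cover_dist n q p"
  unfolding cover_dist_def by (simp add: coord_dist_commute)

lemma cover_dist_self [simp]: "cover_dist n p p = 0"
  unfolding cover_dist_def by (simp add: coord_dist_def)

lemma cover_dist_triangle: "cover_dist n p r \<le> cover_dist n p q + cover_dist n q r"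
  unfolding cover_dist_def sum.distrib[symmetric] by (intro sum_mono coord_dist_triangle)

lemma cover_dist_eq_0:
  assumes "p \<in> Skn k n" "q \<in> Skn k n" "cover_dist n p q = 0"
  shows "p = q"
proof
  fix i
  show "p i = q i"
  proof (cases "i < n")
    case True
    then have "coord_dist (p i) (q i) = 0"
      using assms(3) unfolding cover_dist_def by simp
    then show ?thesis
      by (auto simp: coord_dist_def split: if_splits)
  qed (use assms(1,2) in \<open>auto simp: Skn_def\<close>)
qed

lemma cover_dist_fun_upd:
  assumes "i < n"
  shows "cover_dist n (p(i := v)) q + coord_dist (p i) (q i) = cover_dist n p q + coord_dist v (q i)"
proof -
  have split: "cover_dist n p' q =
      coord_dist (p' i) (q i) + (\<Sum>j\<in>{..<n} - {i}. coord_dist (p' j) (q j))" for p'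
    unfolding cover_dist_def using assms by (subst sum.remove[of _ i]) auto
  have "(\<Sum>j\<in>{..<n} - {i}. coord_dist ((p(i := v)) j) (q j)) =
      (\<Sum>j\<in>{..<n} - {i}. coord_dist (p j) (q j))"
    by (intro sum.cong) auto
  then show ?thesis
    using split[of "p(i := v)"] split[of p] by simp
qed

lemma Sle_antisym: "Sle p q \<Longrightarrow> Sle q p \<Longrightarrow> p = q"
  unfolding Sle_def by (metis ext)

lemma covers_SknD:
  assumes "covers (Skn k n) Sle p q"
  shows "\<exists>i<n. p i = 0 \<and> q i \<noteq> 0 \<and> q = p(i := q i)"
proof -
  have p: "p \<in> Skn k n" and q: "q \<in> Skn k n" and "Sle p q" "p \<noteq> q"
    and no_between: "\<not> (\<exists>r\<in>Skn k n. Sle p r \<and> Sle r q \<and> r \<noteq> p \<and> r \<noteq> q)"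
    using assms unfolding covers_def by auto
  obtain i where "p i \<noteq> q i"
    using \<open>p \<noteq> q\<close> by (auto simp: fun_eq_iff)
  then have "p i = 0" "q i \<noteq> 0"
    using \<open>Sle p q\<close> unfolding Sle_def by metis+
  have "i < n"
  proof (rule ccontr)
    assume "\<not> i < n"
    then show False
      using q \<open>q i \<noteq> 0\<close> unfolding Skn_def by simp
  qed
  have "p(i := q i) = q"
  proof (rule ccontr)
    assume "p(i := q i) \<noteq> q"
    moreover have "p(i := q i) \<in> Skn k n"
      using p q \<open>i < n\<close> unfolding Skn_def by auto
    moreover have "Sle p (p(i := q i))"
      using \<open>p i = 0\<close> unfolding Sle_def by simp
    moreover have "Sle (p(i := q i)) q"
      using \<open>Sle p q\<close> unfolding Sle_def by simp
    moreover have "p(i := q i) \<noteq> p"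
      using \<open>p i \<noteq> q i\<close> by (metis fun_upd_same)
    ultimately show False
      using no_between by blast
  qed
  then show ?thesis
    using \<open>i < n\<close> \<open>p i = 0\<close> \<open>q i \<noteq> 0\<close> by auto
qed

lemma covers_Skn_fun_upd:
  assumes "p \<in> Skn k n" "i < n" "p i = 0" "0 < v" "v \<le> k"
  shows "covers (Skn k n) Sle p (p(i := v))"
  unfolding covers_def
proof (intro conjI)
  show "p \<in> Skn k n" "p(i := v) \<in> Skn k n"
    using assms unfolding Skn_def by auto
  show "Sle p (p(i := v))" "p \<noteq> p(i := v)"
    using assms unfolding Sle_def by (auto simp: fun_eq_iff)
  show "\<not> (\<exists>r\<in>Skn k n. Sle p r \<and> Sle r (p(i := v)) \<and> r \<noteq> p \<and> r \<noteq> p(i := v))"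
  proof
    assume "\<exists>r\<in>Skn k n. Sle p r \<and> Sle r (p(i := v)) \<and> r \<noteq> p \<and> r \<noteq> p(i := v)"
    then obtain r where "Sle p r" "Sle r (p(i := v))" "r \<noteq> p" "r \<noteq> p(i := v)"
      by blast
    moreover have "r j = p j" if "j \<noteq> i" for j
      using \<open>Sle p r\<close> \<open>Sle r (p(i := v))\<close> that unfolding Sle_def by (metis fun_upd_other)
    moreover have "r i = 0 \<or> r i = v"
      using \<open>Sle r (p(i := v))\<close> unfolding Sle_def by (metis fun_upd_same)
    ultimately have "r = p \<or> r = p(i := v)"
      using assms(3) by (metis fun_upd_apply ext)
    then show False
      using \<open>r \<noteq> p\<close> \<open>r \<noteq> p(i := v)\<close> by blast
  qed
qed

lemma cover_dist_covers:
  assumes "covers (Skn k n) Sle p q \<or> covers (Skn k n) Sle q p"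
  shows "cover_dist n p q = 1"
proof -
  have "cover_dist n p q = 1" if cov: "covers (Skn k n) Sle p q" for p q
  proof -
    obtain i where i: "i < n" "p i = 0" "q i \<noteq> 0" "q = p(i := q i)"
      using covers_SknD[OF cov] by blast
    then show ?thesis
      using cover_dist_fun_upd[OF i(1), of p "q i" q] by (simp add: coord_dist_def)
  qed
  then show ?thesis
    using assms cover_dist_commute by metis
qed

lemma cover_dist_along_path:
  assumes "cg_path (Skn k n) Sle xs" "i \<le> j" "j < length xs"
  shows "cover_dist n (xs ! i) (xs ! j) \<le> j - i"
  using assms(2,3)
proof (induction j)
  case (Suc j)
  show ?case
  proof (cases "i = Suc j")
    case False
    then have "cover_dist n (xs ! i) (xs ! j) \<le> j - i"
      using Suc by simp
    moreover have "cover_dist n (xs ! j) (xs ! Suc j) = 1"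
      using assms(1) Suc.prems(2) unfolding cg_path_def by (intro cover_dist_covers) blast
    ultimately show ?thesis
      using cover_dist_triangle[of n "xs ! i" "xs ! Suc j" "xs ! j"] Suc.prems False by linarith
  qed simp
qed simp

lemma cover_dist_le_path_length:
  assumes "cg_path (Skn k n) Sle xs" "hd xs = p" "last xs = q" "length xs = Suc m"
  shows "cover_dist n p q \<le> m"
proof -
  have "xs \<noteq> []"
    using assms(4) by auto
  then have "p = xs ! 0" "q = xs ! m"
    using assms by (auto simp: hd_conv_nth last_conv_nth)
  then show ?thesis
    using cover_dist_along_path[OF assms(1), of 0 m] assms(4) by simp
qed

lemma cover_step_towards:
  assumes "p \<in> Skn k n" "q \<in> Skn k n" "p \<noteq> q"
  shows "\<exists>p'\<in>Skn k n. (covers (Skn k n) Sle p p' \<or> covers (Skn k n) Sle p' p) \<and>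
    cover_dist n p' q + 1 = cover_dist n p q"
proof -
  obtain i where i: "p i \<noteq> q i"
    using assms(3) by auto
  have "i < n"
  proof (rule ccontr)
    assume "\<not> i < n"
    then show False
      using assms(1,2) i unfolding Skn_def by simp
  qed
  show ?thesis
  proof (cases "p i = 0")
    case True
    have "0 < q i" "q i \<le> k"
      using True i assms(2) \<open>i < n\<close> unfolding Skn_def by auto
    then have "covers (Skn k n) Sle p (p(i := q i))"
      by (intro covers_Skn_fun_upd[OF assms(1) \<open>i < n\<close> True])
    moreover have "p(i := q i) \<in> Skn k n"
      using assms(1,2) \<open>i < n\<close> unfolding Skn_def by auto
    moreover have "cover_dist n (p(i := q i)) q + 1 = cover_dist n p q"
      using cover_dist_fun_upd[OF \<open>i < n\<close>, of p "q i" q] True i by (simp add: coord_dist_def)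
    ultimately show ?thesis
      by blast
  next
    case False
    have "0 < p i" "p i \<le> k"
      using False assms(1) \<open>i < n\<close> unfolding Skn_def by auto
    have "p(i := 0) \<in> Skn k n"
      using assms(1) unfolding Skn_def by auto
    moreover from this have "covers (Skn k n) Sle (p(i := 0)) p"
      using covers_Skn_fun_upd[of "p(i := 0)" k n i "p i"] \<open>i < n\<close> \<open>0 < p i\<close> \<open>p i \<le> k\<close>
      by simp
    moreover have "cover_dist n (p(i := 0)) q + 1 = cover_dist n p q"
      using cover_dist_fun_upd[OF \<open>i < n\<close>, of p 0 q] False i
      by (auto simp: coord_dist_def split: if_splits)
    ultimately show ?thesis
      by blast
  qed
qed

lemma cg_path_Cons:
  assumes "cg_path L le xs" "p \<in> L" "covers L le p (hd xs) \<or> covers L le (hd xs) p"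
  shows "cg_path L le (p # xs)"
  unfolding cg_path_def
proof (intro conjI allI impI)
  have "xs \<noteq> []"
    using assms(1) unfolding cg_path_def by simp
  fix i assume "Suc i < length (p # xs)"
  then show "covers L le ((p # xs) ! i) ((p # xs) ! Suc i) \<or> covers L le ((p # xs) ! Suc i) ((p # xs) ! i)"
    using assms \<open>xs \<noteq> []\<close> unfolding cg_path_def by (cases i) (auto simp: hd_conv_nth)
qed (use assms in \<open>auto simp: cg_path_def\<close>)

lemma shortest_path_through:
  assumes "p \<in> Skn k n" "u \<in> Skn k n" "q \<in> Skn k n"
    and "cover_dist n p u + cover_dist n u q = cover_dist n p q"
  shows "\<exists>xs. cg_path (Skn k n) Sle xs \<and> hd xs = p \<and> last xs = q \<and>
    length xs = Suc (cover_dist n p q) \<and> u \<in> set xs"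
  using assms
proof (induction "cover_dist n p q" arbitrary: p u)
  case 0
  then have "p = q" "u = p"
    using cover_dist_eq_0 by (metis add_is_0)+
  then show ?case
    using 0 by (intro exI[of _ "[p]"]) (auto simp: cg_path_def)
next
  case (Suc m)
  \<comment> \<open>If \<open>u = p\<close>, step towards \<open>q\<close> instead; \<open>u\<close> then lies on the path as its head.\<close>
  define u' where "u' = (if p = u then q else u)"
  have "u' \<in> Skn k n" "cover_dist n p u' + cover_dist n u' q = cover_dist n p q" "p \<noteq> u'"
    using Suc by (auto simp: u'_def)
  then obtain p' where p': "p' \<in> Skn k n" "covers (Skn k n) Sle p p' \<or> covers (Skn k n) Sle p' p"
    "cover_dist n p' u' + 1 = cover_dist n p u'"
    using cover_step_towards[OF Suc.prems(1)] by blast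
  have "cover_dist n p q \<le> cover_dist n p p' + cover_dist n p' q"
    "cover_dist n p' q \<le> cover_dist n p' u' + cover_dist n u' q"
    by (rule cover_dist_triangle)+
  then have "m = cover_dist n p' q" "cover_dist n p' u' + cover_dist n u' q = cover_dist n p' q"
    using Suc.hyps(2) p' \<open>cover_dist n p u' + _ = _\<close> cover_dist_covers[OF p'(2)] by linarith+
  then obtain xs where xs: "cg_path (Skn k n) Sle xs" "hd xs = p'" "last xs = q" "length xs = Suc m"
    "u' \<in> set xs"
    using Suc.hyps(1) p'(1) \<open>u' \<in> Skn k n\<close> Suc.prems(3) by metis
  then have "cg_path (Skn k n) Sle (p # xs)"
    using cg_path_Cons Suc.prems(1) p'(2) by metis
  moreover have "u \<in> set (p # xs)"
    using xs(5) by (auto simp: u'_def split: if_splits)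
  ultimately show ?case
    using xs Suc.hyps(2) by (intro exI[of _ "p # xs"]) auto
qed

lemma cg_dist_Skn:
  assumes "p \<in> Skn k n" "q \<in> Skn k n"
  shows "cg_dist (Skn k n) Sle p q = cover_dist n p q"
  unfolding cg_dist_def
proof (rule Least_equality)
  show "\<exists>xs. cg_path (Skn k n) Sle xs \<and> hd xs = p \<and> last xs = q \<and> length xs = Suc (cover_dist n p q)"
    using shortest_path_through[OF assms(1,1,2)] by auto
qed (use cover_dist_le_path_length in blast)

lemma interval_Skn:
  assumes "p \<in> Skn k n" "q \<in> Skn k n"
  shows "interval (Skn k n) Sle p q =
    {u \<in> Skn k n. cover_dist n p u + cover_dist n u q = cover_dist n p q}"
proof safe
  fix u assume "u \<in> interval (Skn k n) Sle p q"
  then obtain xs where xs: "cg_path (Skn k n) Sle xs" "hd xs = p" "last xs = q"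
    "length xs = Suc (cover_dist n p q)" "u \<in> set xs"
    unfolding interval_def cg_dist_Skn[OF assms] by auto
  then show "u \<in> Skn k n"
    unfolding cg_path_def by auto
  obtain j where j: "j < length xs" "u = xs ! j"
    using xs(5) by (metis in_set_conv_nth)
  have "xs \<noteq> []"
    using xs(4) by auto
  then have ends: "p = xs ! 0" "q = xs ! cover_dist n p q"
    using xs by (auto simp: hd_conv_nth last_conv_nth)
  have "cover_dist n p u \<le> j"
    using cover_dist_along_path[OF xs(1), of 0 j] j ends by simp
  moreover have "cover_dist n u q \<le> cover_dist n p q - j"
    using cover_dist_along_path[OF xs(1), of j "cover_dist n p q"] j ends xs(4) by simp
  ultimately show "cover_dist n p u + cover_dist n u q = cover_dist n p q"
    using cover_dist_triangle[of n p q u] j xs(4) by linarith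
qed (use shortest_path_through assms in \<open>auto simp: interval_def cg_dist_Skn\<close>)

lemma interval_Skn_coord:
  assumes "p \<in> Skn k n" "q \<in> Skn k n" "u \<in> interval (Skn k n) Sle p q" "i < n"
  shows "coord_dist (p i) (u i) + coord_dist (u i) (q i) = coord_dist (p i) (q i)"
proof (rule ccontr)
  assume "\<not> ?thesis"
  then have "coord_dist (p i) (q i) < coord_dist (p i) (u i) + coord_dist (u i) (q i)"
    using coord_dist_triangle[of "p i" "q i" "u i"] by linarith
  then have "cover_dist n p q < cover_dist n p u + cover_dist n u q"
    unfolding cover_dist_def sum.distrib[symmetric] using assms(4)
    by (intro sum_strict_mono_ex1) (auto intro: coord_dist_triangle)
  then show False
    using assms interval_Skn by fastforce
qed

section \<open>Rank vectors and biased joins\<close>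

definition supp :: "nat \<Rightarrow> (nat \<Rightarrow> nat) \<Rightarrow> nat set" where
  "supp n p = {i. i < n \<and> p i \<noteq> 0}"

definition biased_join :: "(nat \<Rightarrow> nat) \<Rightarrow> (nat \<Rightarrow> nat) \<Rightarrow> nat \<Rightarrow> nat" where
  "biased_join p q = (\<lambda>i. if p i \<noteq> 0 then p i else q i)"

definition has_conflict :: "nat \<Rightarrow> (nat \<Rightarrow> nat) \<Rightarrow> (nat \<Rightarrow> nat) \<Rightarrow> bool" where
  "has_conflict n p q \<longleftrightarrow> (\<exists>i<n. p i \<noteq> 0 \<and> q i \<noteq> 0 \<and> p i \<noteq> q i)"

lemma Srank_eq_card_supp: "Srank n p = card (supp n p)"
  unfolding Srank_def supp_def ..

lemma finite_supp [simp]: "finite (supp n p)"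
  unfolding supp_def by simp

lemma kmeet_Skn: "p \<in> Skn k n \<Longrightarrow> q \<in> Skn k n \<Longrightarrow> kmeet p q \<in> Skn k n"
  unfolding Skn_def kmeet_def by auto

lemma kjoin_Skn: "p \<in> Skn k n \<Longrightarrow> q \<in> Skn k n \<Longrightarrow> kjoin p q \<in> Skn k n"
  unfolding Skn_def kjoin_def by auto

lemma biased_join_Skn: "p \<in> Skn k n \<Longrightarrow> q \<in> Skn k n \<Longrightarrow> biased_join p q \<in> Skn k n"
  unfolding Skn_def biased_join_def by auto

lemma kmeet_commute: "kmeet p q = kmeet q p"
  unfolding kmeet_def by (auto simp: fun_eq_iff)

lemma Sle_kmeet:
  assumes "Sle r p" "Sle r q"
  shows "Sle r (kmeet p q)"
  unfolding Sle_def
proof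
  fix i
  have "r i = 0 \<or> r i = p i" "r i = 0 \<or> r i = q i"
    using assms unfolding Sle_def by blast+
  then show "r i = 0 \<or> r i = kmeet p q i"
    unfolding kmeet_def by auto
qed

lemma kmeet_Sle: "Sle (kmeet p q) p" "Sle (kmeet p q) q"
  unfolding Sle_def kmeet_def by auto

lemma glb_Skn:
  assumes "p \<in> Skn k n" "q \<in> Skn k n"
  shows "glb (Skn k n) Sle p q = kmeet p q"
  unfolding glb_def
proof (rule the_equality)
  show "kmeet p q \<in> Skn k n \<and> Sle (kmeet p q) p \<and> Sle (kmeet p q) q \<and>
      (\<forall>r\<in>Skn k n. Sle r p \<and> Sle r q \<longrightarrow> Sle r (kmeet p q))"
    using kmeet_Skn[OF assms] kmeet_Sle Sle_kmeet by blast
next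
  fix m assume m: "m \<in> Skn k n \<and> Sle m p \<and> Sle m q \<and> (\<forall>r\<in>Skn k n. Sle r p \<and> Sle r q \<longrightarrow> Sle r m)"
  then have "Sle (kmeet p q) m"
    using kmeet_Skn[OF assms] kmeet_Sle by blast
  moreover have "Sle m (kmeet p q)"
    using m Sle_kmeet by blast
  ultimately show "m = kmeet p q"
    by (rule Sle_antisym[rotated])
qed

lemma rvec_Skn:
  assumes "p \<in> Skn k n" "q \<in> Skn k n" "u \<in> Skn k n"
  shows "rvec (Skn k n) Sle (Srank n) p q u =
    (real (card (supp n (kmeet u p))) - real (card (supp n (kmeet p q))),
     real (card (supp n (kmeet u q))) - real (card (supp n (kmeet p q))))"
  unfolding rvec_def glb_Skn[OF assms(3,1)] glb_Skn[OF assms(3,2)] glb_Skn[OF assms(1,2)]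
    Srank_eq_card_supp ..

lemma supp_kmeet_subset: "supp n (kmeet u p) \<subseteq> supp n p"
  unfolding supp_def kmeet_def by auto

lemma supp_kmeet_subset_Int: "supp n (kmeet p q) \<subseteq> supp n p \<inter> supp n q"
  unfolding supp_def kmeet_def by auto

lemma card_supp_kmeet_add_le:
  "card (supp n (kmeet u p)) + card (supp n (kmeet u q)) \<le>
    card (supp n p \<union> supp n q) + card (supp n (kmeet p q))"
proof -
  have "card (supp n (kmeet u p)) + card (supp n (kmeet u q)) =
      card (supp n (kmeet u p) \<union> supp n (kmeet u q)) + card (supp n (kmeet u p) \<inter> supp n (kmeet u q))"
    by (rule card_Un_Int) auto
  moreover have "card (supp n (kmeet u p) \<union> supp n (kmeet u q)) \<le> card (supp n p \<union> supp n q)"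
    using supp_kmeet_subset by (intro card_mono) auto
  moreover have "card (supp n (kmeet u p) \<inter> supp n (kmeet u q)) \<le> card (supp n (kmeet p q))"
    by (intro card_mono) (auto simp: supp_def kmeet_def)
  ultimately show ?thesis
    by linarith
qed

lemma has_conflict_iff_card_supp:
  "has_conflict n p q \<longleftrightarrow> card (supp n (kmeet p q)) < card (supp n p \<inter> supp n q)"
proof -
  note sub = supp_kmeet_subset_Int[of n p q]
  have "has_conflict n p q \<longleftrightarrow> (\<exists>i. i \<in> supp n p \<inter> supp n q \<and> i \<notin> supp n (kmeet p q))"
    unfolding has_conflict_def supp_def kmeet_def by auto
  also have "\<dots> \<longleftrightarrow> supp n (kmeet p q) \<subset> supp n p \<inter> supp n q"
    using sub by blast
  also have "\<dots> \<longleftrightarrow> card (supp n (kmeet p q)) < card (supp n p \<inter> supp n q)"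
  proof
    assume "supp n (kmeet p q) \<subset> supp n p \<inter> supp n q"
    then show "card (supp n (kmeet p q)) < card (supp n p \<inter> supp n q)"
      by (intro psubset_card_mono) auto
  next
    assume "card (supp n (kmeet p q)) < card (supp n p \<inter> supp n q)"
    then have "supp n (kmeet p q) \<noteq> supp n p \<inter> supp n q"
      by auto
    then show "supp n (kmeet p q) \<subset> supp n p \<inter> supp n q"
      using sub by blast
  qed
  finally show ?thesis .
qed

lemma supp_kmeet_biased_join_left: "supp n (kmeet (biased_join p q) p) = supp n p"
  unfolding supp_def kmeet_def biased_join_def by auto

lemma supp_kmeet_biased_join_right:
  "supp n (kmeet (biased_join p q) q) = supp n (kmeet p q) \<union> (supp n q - supp n p)"
  unfolding supp_def kmeet_def biased_join_def by auto

lemma biased_join_in_interval: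
  assumes "p \<in> Skn k n" "q \<in> Skn k n"
  shows "biased_join p q \<in> interval (Skn k n) Sle p q"
proof -
  have "cover_dist n p (biased_join p q) + cover_dist n (biased_join p q) q = cover_dist n p q"
    unfolding cover_dist_def sum.distrib[symmetric]
    by (intro sum.cong) (auto simp: biased_join_def coord_dist_def)
  then show ?thesis
    using interval_Skn[OF assms] biased_join_Skn[OF assms] by auto
qed

lemma interval_commute:
  assumes "p \<in> Skn k n" "q \<in> Skn k n"
  shows "interval (Skn k n) Sle p q = interval (Skn k n) Sle q p"
  using interval_Skn[OF assms] interval_Skn[OF assms(2,1)] cover_dist_commute
  by (auto simp: add.commute)

lemma eq_biased_join_if_supp_kmeet:
  assumes "p \<in> Skn k n" "q \<in> Skn k n" "u \<in> interval (Skn k n) Sle p q"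
    and left: "supp n (kmeet u p) = supp n p"
    and right: "supp n (kmeet p q) \<union> (supp n q - supp n p) \<subseteq> supp n (kmeet u q)"
  shows "u = biased_join p q"
proof
  fix i
  have "u \<in> Skn k n"
    using assms(3) interval_Skn[OF assms(1,2)] by auto
  show "u i = biased_join p q i"
  proof (cases "i < n")
    case True
    have "coord_dist (p i) (u i) + coord_dist (u i) (q i) = coord_dist (p i) (q i)"
      using interval_Skn_coord[OF assms(1-3) True] .
    moreover have "p i \<noteq> 0 \<Longrightarrow> u i = p i"
      using left True unfolding supp_def kmeet_def by (auto simp: set_eq_iff split: if_splits)
    moreover have "p i = 0 \<Longrightarrow> q i \<noteq> 0 \<Longrightarrow> u i = q i"
      using right True unfolding supp_def kmeet_def by (auto simp: subset_iff split: if_splits)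
    ultimately show ?thesis
      unfolding biased_join_def by (auto simp: coord_dist_def split: if_splits)
  qed (use \<open>u \<in> Skn k n\<close> assms(1,2) in \<open>auto simp: Skn_def biased_join_def\<close>)
qed


lemma card_supp_Un_Int:
  "real (card (supp n p)) + real (card (supp n q)) =
    real (card (supp n p \<union> supp n q)) + real (card (supp n p \<inter> supp n q))"
  using card_Un_Int[of "supp n p" "supp n q"] by (simp flip: of_nat_add)

lemma card_supp_kmeet_le_Int: "real (card (supp n (kmeet p q))) \<le> real (card (supp n p \<inter> supp n q))"
  using supp_kmeet_subset_Int by (simp add: card_mono)

lemma rvec_Skn_commute:
  assumes "p \<in> Skn k n" "q \<in> Skn k n" "u \<in> Skn k n"
  shows "rvec (Skn k n) Sle (Srank n) q p u = prod.swap (rvec (Skn k n) Sle (Srank n) p q u)"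
  using assms by (simp add: rvec_Skn kmeet_commute)

lemma card_supp_kmeet_biased_join_right:
  "real (card (supp n (kmeet (biased_join p q) q))) =
    real (card (supp n (kmeet p q))) + real (card (supp n p \<union> supp n q)) - real (card (supp n p))"
proof -
  have "card (supp n p \<union> supp n q) = card (supp n p) + card (supp n q - supp n p)"
    by (subst card_Un_disjoint[symmetric]) (auto intro: arg_cong[where f = card])
  moreover have "card (supp n (kmeet p q) \<union> (supp n q - supp n p)) =
      card (supp n (kmeet p q)) + card (supp n q - supp n p)"
    using supp_kmeet_subset[of n q p] kmeet_commute[of p q] by (intro card_Un_disjoint) auto
  ultimately show ?thesis
    unfolding supp_kmeet_biased_join_right by simp
qed

lemma rvec_biased_join:
  assumes "p \<in> Skn k n" "q \<in> Skn k n"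
  defines "a \<equiv> real (card (supp n p)) - real (card (supp n (kmeet p q)))"
    and "c \<equiv> real (card (supp n p \<union> supp n q)) - real (card (supp n (kmeet p q)))"
  shows "rvec (Skn k n) Sle (Srank n) p q (biased_join p q) = (a, c - a)"
  using card_supp_kmeet_biased_join_right[of n p q]
  by (simp add: rvec_Skn[OF assms(1,2) biased_join_Skn[OF assms(1,2)]] supp_kmeet_biased_join_left
      a_def c_def)

lemma eq_biased_join_if_rvec:
  assumes "p \<in> Skn k n" "q \<in> Skn k n" "u \<in> interval (Skn k n) Sle p q"
  defines "a \<equiv> real (card (supp n p)) - real (card (supp n (kmeet p q)))"
    and "c \<equiv> real (card (supp n p \<union> supp n q)) - real (card (supp n (kmeet p q)))"
  assumes "rvec (Skn k n) Sle (Srank n) p q u = (a, c - a)"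
  shows "u = biased_join p q"
proof -
  have "u \<in> Skn k n"
    using assms(3) interval_Skn[OF assms(1,2)] by auto
  then have cards: "card (supp n (kmeet u p)) = card (supp n p)"
    "card (supp n (kmeet u q)) = card (supp n (kmeet (biased_join p q) q))"
    using assms(6) card_supp_kmeet_biased_join_right[of n p q]
    by (simp_all add: rvec_Skn[OF assms(1,2)] a_def c_def)
  then have left: "supp n (kmeet u p) = supp n p"
    by (intro card_subset_eq supp_kmeet_subset) auto
  then have "supp n (kmeet u q) \<subseteq> supp n (kmeet (biased_join p q) q)"
    unfolding supp_kmeet_biased_join_right unfolding supp_def kmeet_def
    by (auto simp: set_eq_iff split: if_splits)
  then have "supp n (kmeet u q) = supp n (kmeet (biased_join p q) q)"
    using cards(2) by (intro card_subset_eq) auto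
  then show ?thesis
    using left supp_kmeet_biased_join_right[of n p q]
    by (intro eq_biased_join_if_supp_kmeet[OF assms(1-3)]) auto
qed

text \<open>The right corner is the left one for \<open>(q, p)\<close>, with the coordinates swapped.\<close>

lemma biased_join_iff_rvec:
  assumes "p \<in> Skn k n" "q \<in> Skn k n" "u \<in> interval (Skn k n) Sle p q"
  defines "a \<equiv> real (card (supp n p)) - real (card (supp n (kmeet p q)))"
    and "b \<equiv> real (card (supp n q)) - real (card (supp n (kmeet p q)))"
    and "c \<equiv> real (card (supp n p \<union> supp n q)) - real (card (supp n (kmeet p q)))"
  shows "u = biased_join p q \<longleftrightarrow> rvec (Skn k n) Sle (Srank n) p q u = (a, c - a)"
    and "u = biased_join q p \<longleftrightarrow> rvec (Skn k n) Sle (Srank n) p q u = (c - b, b)"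
proof -
  show "u = biased_join p q \<longleftrightarrow> rvec (Skn k n) Sle (Srank n) p q u = (a, c - a)"
    using eq_biased_join_if_rvec[OF assms(1-3)] rvec_biased_join[OF assms(1,2)]
    unfolding a_def c_def by blast
  have "u \<in> Skn k n" "u \<in> interval (Skn k n) Sle q p"
    using assms(3) interval_Skn[OF assms(1,2)] interval_commute[OF assms(1,2)] by auto
  then show "u = biased_join q p \<longleftrightarrow> rvec (Skn k n) Sle (Srank n) p q u = (c - b, b)"
    using eq_biased_join_if_rvec[OF assms(2,1)] rvec_biased_join[OF assms(2,1)]
      rvec_Skn_commute[OF assms(2,1)]
    unfolding b_def c_def by (auto simp: kmeet_commute Un_commute prod_eq_iff)
qed

lemma corner_polygon_rvec_Skn:
  assumes "p \<in> Skn k n" "q \<in> Skn k n"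
  defines "a \<equiv> real (card (supp n p)) - real (card (supp n (kmeet p q)))"
    and "b \<equiv> real (card (supp n q)) - real (card (supp n (kmeet p q)))"
    and "c \<equiv> real (card (supp n p \<union> supp n q)) - real (card (supp n (kmeet p q)))"
  shows "corner_polygon (rvec (Skn k n) Sle (Srank n) p q ` interval (Skn k n) Sle p q) a b c"
proof
  show "rvec (Skn k n) Sle (Srank n) p q ` interval (Skn k n) Sle p q \<subseteq>
    {z. fst z \<le> a \<and> snd z \<le> b \<and> fst z + snd z \<le> c}"
  proof
    fix z assume "z \<in> rvec (Skn k n) Sle (Srank n) p q ` interval (Skn k n) Sle p q"
    then obtain u where "u \<in> interval (Skn k n) Sle p q" "z = rvec (Skn k n) Sle (Srank n) p q u"
      by blast
    moreover from this have "u \<in> Skn k n"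
      using interval_Skn[OF assms(1,2)] by auto
    moreover have "card (supp n (kmeet u p)) \<le> card (supp n p)" "card (supp n (kmeet u q)) \<le> card (supp n q)"
      by (intro card_mono supp_kmeet_subset; simp)+
    ultimately show "z \<in> {z. fst z \<le> a \<and> snd z \<le> b \<and> fst z + snd z \<le> c}"
      using card_supp_kmeet_add_le[of n u p q]
      by (simp add: rvec_Skn[OF assms(1,2)] a_def b_def c_def)
  qed
  show "(a, c - a) \<in> rvec (Skn k n) Sle (Srank n) p q ` interval (Skn k n) Sle p q"
    "(c - b, b) \<in> rvec (Skn k n) Sle (Srank n) p q ` interval (Skn k n) Sle p q"
    using biased_join_iff_rvec[OF assms(1,2)] biased_join_in_interval[OF assms(1,2)]
      biased_join_in_interval[OF assms(2,1)] interval_commute[OF assms(1,2)]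
    unfolding a_def b_def c_def by (metis image_eqI)+
  show "c \<le> a + b"
    using card_supp_Un_Int[of n p q] card_supp_kmeet_le_Int[of n p q]
    unfolding a_def b_def c_def by linarith
qed

lemma has_conflict_iff_corners:
  fixes n :: nat and p q :: "nat \<Rightarrow> nat"
  defines "a \<equiv> real (card (supp n p)) - real (card (supp n (kmeet p q)))"
    and "b \<equiv> real (card (supp n q)) - real (card (supp n (kmeet p q)))"
    and "c \<equiv> real (card (supp n p \<union> supp n q)) - real (card (supp n (kmeet p q)))"
  shows "has_conflict n p q \<longleftrightarrow> c < a + b"
  using card_supp_Un_Int[of n p q] has_conflict_iff_card_supp[of n p q]
  unfolding a_def b_def c_def by simp

lemma Eset_Skn:
  assumes "p \<in> Skn k n" "q \<in> Skn k n"
  shows "Eset (Skn k n) Sle (Srank n) p q = {biased_join p q, biased_join q p}"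
proof -
  define m where "m = real (card (supp n (kmeet p q)))"
  define a where "a = real (card (supp n p)) - m"
  define b where "b = real (card (supp n q)) - m"
  define c where "c = real (card (supp n p \<union> supp n q)) - m"
  define r where "r = rvec (Skn k n) Sle (Srank n) p q"
  define I where "I = interval (Skn k n) Sle p q"
  interpret corner_polygon "r ` I" a b c
    unfolding r_def I_def a_def b_def c_def m_def by (rule corner_polygon_rvec_Skn[OF assms])
  have "Eset (Skn k n) Sle (Srank n) p q = {u \<in> I. maximal_extreme_point (r u)}"
    unfolding maximal_extreme_point_def unfolding Eset_def convI_def r_def I_def ..
  also have "\<dots> = {u \<in> I. r u = (a, c - a) \<or> r u = (c - b, b)}"
    using maximal_extreme_point_iff by (blast intro: hull_inc imageI)
  also have "\<dots> = {u \<in> I. u = biased_join p q \<or> u = biased_join q p}"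
    using biased_join_iff_rvec[OF assms]
    unfolding r_def I_def a_def b_def c_def m_def by blast
  also have "\<dots> = {biased_join p q, biased_join q p}"
    using biased_join_in_interval[OF assms] biased_join_in_interval[OF assms(2,1)]
      interval_commute[OF assms] unfolding I_def by auto
  finally show ?thesis .
qed

lemma Ccone_Skn_biased_join:
  assumes "p \<in> Skn k n" "q \<in> Skn k n"
  shows "Ccone (Skn k n) Sle (Srank n) p q (biased_join p q) =
      (if has_conflict n p q then {w. 0 \<le> fst w \<and> 0 \<le> snd w \<and> snd w \<le> fst w}
       else {w. 0 \<le> fst w \<and> 0 \<le> snd w})"
    and "Ccone (Skn k n) Sle (Srank n) p q (biased_join q p) =
      (if has_conflict n p q then {w. 0 \<le> fst w \<and> 0 \<le> snd w \<and> fst w \<le> snd w}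
       else {w. 0 \<le> fst w \<and> 0 \<le> snd w})"
proof -
  define m where "m = real (card (supp n (kmeet p q)))"
  define a where "a = real (card (supp n p)) - m"
  define b where "b = real (card (supp n q)) - m"
  define c where "c = real (card (supp n p \<union> supp n q)) - m"
  define r where "r = rvec (Skn k n) Sle (Srank n) p q"
  define I where "I = interval (Skn k n) Sle p q"
  interpret corner_polygon "r ` I" a b c
    unfolding r_def I_def a_def b_def c_def m_def by (rule corner_polygon_rvec_Skn[OF assms])
  have hull: "convI (Skn k n) Sle (Srank n) p q = convex hull (r ` I)"
    unfolding convI_def r_def I_def ..
  have conflict: "has_conflict n p q \<longleftrightarrow> c < a + b"
    unfolding a_def b_def c_def m_def by (rule has_conflict_iff_corners)
  have "r (biased_join p q) = (a, c - a)" "r (biased_join q p) = (c - b, b)"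
    using biased_join_iff_rvec[OF assms] biased_join_in_interval[OF assms]
      biased_join_in_interval[OF assms(2,1)] interval_commute[OF assms]
    unfolding r_def a_def b_def c_def m_def by blast+
  then show "Ccone (Skn k n) Sle (Srank n) p q (biased_join p q) =
      (if has_conflict n p q then {w. 0 \<le> fst w \<and> 0 \<le> snd w \<and> snd w \<le> fst w}
       else {w. 0 \<le> fst w \<and> 0 \<le> snd w})"
    and "Ccone (Skn k n) Sle (Srank n) p q (biased_join q p) =
      (if has_conflict n p q then {w. 0 \<le> fst w \<and> 0 \<le> snd w \<and> fst w \<le> snd w}
       else {w. 0 \<le> fst w \<and> 0 \<le> snd w})"
    using normal_cone_left_corner normal_cone_right_corner
    unfolding Ccone_def hull conflict r_def by simp_all
qed

section \<open>Two inequalities in the extended reals\<close>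

lemma ereal_finite_if_add_le:
  fixes a b :: ereal
  assumes "a \<noteq> -\<infinity>" "b \<noteq> -\<infinity>" "a + b \<le> ereal x"
  shows "\<exists>r s. a = ereal r \<and> b = ereal s"
  using assms by (cases a; cases b) auto

text \<open>Either the right-hand side is \<open>\<infinity>\<close>, or all terms are finite and the claim is linear
  arithmetic over the reals.\<close>

lemma ereal_average_le_of_chain:
  fixes P Q M J A U U' :: ereal
  assumes "P \<noteq> -\<infinity>" "Q \<noteq> -\<infinity>" "M \<noteq> -\<infinity>" "J \<noteq> -\<infinity>" "A \<noteq> -\<infinity>" "U \<noteq> -\<infinity>" "U' \<noteq> -\<infinity>"
    and "M + U \<le> A + P" "M + J \<le> P + Q" "A + U' \<le> Q + J"
  shows "M + (ereal (1/2) * U + ereal (1/2) * U') \<le> P + Q"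
proof (cases "P = \<infinity> \<or> Q = \<infinity>")
  case True
  then show ?thesis
    using assms(1,2) by auto
next
  case False
  then obtain p q where "P = ereal p" "Q = ereal q"
    using assms(1,2) by (cases P; cases Q) auto
  moreover from this obtain m j where "M = ereal m" "J = ereal j"
    using ereal_finite_if_add_le[OF assms(3,4), of "p + q"] assms(9) by auto
  moreover from calculation obtain a u' where "A = ereal a" "U' = ereal u'"
    using ereal_finite_if_add_le[OF assms(5,7), of "q + j"] assms(10) by auto
  moreover from calculation obtain u where "U = ereal u"
    using ereal_finite_if_add_le[OF assms(3,6), of "a + p"] assms(8) by auto
  ultimately show ?thesis
    using assms(8-10) by simp
qed

lemma ereal_le_of_average:
  fixes P Q M J U U' :: ereal
  assumes "P \<noteq> -\<infinity>" "Q \<noteq> -\<infinity>" "M \<noteq> -\<infinity>" "J \<noteq> -\<infinity>" "U \<noteq> -\<infinity>" "U' \<noteq> -\<infinity>"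
    and "M + (ereal (1/2) * U + ereal (1/2) * U') \<le> P + Q"
    and "J + (ereal (1/2) * U + ereal (1/2) * U') \<le> U + U'"
  shows "M + J \<le> P + Q"
proof (cases "P = \<infinity> \<or> Q = \<infinity>")
  case True
  then show ?thesis
    using assms(1,2) by auto
next
  case False
  then obtain p q where "P = ereal p" "Q = ereal q"
    using assms(1,2) by (cases P; cases Q) auto
  moreover have "ereal (1/2) * U + ereal (1/2) * U' \<noteq> -\<infinity>"
    using assms(5,6) by (cases U; cases U') auto
  ultimately obtain m where "M = ereal m" "ereal (1/2) * U + ereal (1/2) * U' \<noteq> \<infinity>"
    using ereal_finite_if_add_le[OF assms(3), of _ "p + q"] assms(7) by fastforce
  moreover from this obtain u u' where "U = ereal u" "U' = ereal u'"
    using assms(5,6) by (cases U; cases U') auto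
  moreover from this obtain j where "J = ereal j"
    using assms(4,8) by (cases J) auto
  ultimately show ?thesis
    using assms(7,8) \<open>P = ereal p\<close> \<open>Q = ereal q\<close> by simp
qed

section \<open>Submodularity on \<open>S\<^sub>k\<^sup>n\<close>\<close>

lemma biased_join_eq_kjoin:
  assumes "p \<in> Skn k n" "\<not> has_conflict n p q"
  shows "biased_join p q = kjoin p q" "biased_join q p = kjoin p q"
proof -
  have "p i = q i" "q i = p i" if "p i \<noteq> 0" "q i \<noteq> 0" for i
    using assms that unfolding has_conflict_def Skn_def by (cases "i < n"; auto)+
  then show "biased_join p q = kjoin p q" "biased_join q p = kjoin p q"
    unfolding biased_join_def kjoin_def by (auto simp: fun_eq_iff)
qed

lemma biased_join_neq:
  assumes "has_conflict n p q"
  shows "biased_join p q \<noteq> biased_join q p"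
proof -
  obtain i where "p i \<noteq> 0" "q i \<noteq> 0" "p i \<noteq> q i"
    using assms unfolding has_conflict_def by blast
  then have "biased_join p q i \<noteq> biased_join q p i"
    unfolding biased_join_def by simp
  then show ?thesis
    by metis
qed

definition averaged_join :: "((nat \<Rightarrow> nat) \<Rightarrow> ereal) \<Rightarrow> nat \<Rightarrow> (nat \<Rightarrow> nat) \<Rightarrow> (nat \<Rightarrow> nat) \<Rightarrow> ereal" where
  "averaged_join f n p q = (if has_conflict n p q
     then ereal (1/2) * f (biased_join p q) + ereal (1/2) * f (biased_join q p)
     else f (kjoin p q))"

lemma submodular_sum_Skn:
  assumes "p \<in> Skn k n" "q \<in> Skn k n"
  shows "(\<Sum>u\<in>{u \<in> Eset (Skn k n) Sle (Srank n) p q. cone_coef (Ccone (Skn k n) Sle (Srank n) p q u) \<noteq> 0}.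
      ereal (cone_coef (Ccone (Skn k n) Sle (Srank n) p q u)) * f u) = averaged_join f n p q"
proof (cases "has_conflict n p q")
  case True
  then have coefs: "cone_coef (Ccone (Skn k n) Sle (Srank n) p q (biased_join p q)) = 1/2"
    "cone_coef (Ccone (Skn k n) Sle (Srank n) p q (biased_join q p)) = 1/2"
    using Ccone_Skn_biased_join[OF assms] by (simp_all add: cone_coef_lower_half cone_coef_upper_half)
  then have "{u \<in> Eset (Skn k n) Sle (Srank n) p q. cone_coef (Ccone (Skn k n) Sle (Srank n) p q u) \<noteq> 0}
      = {biased_join p q, biased_join q p}"
    using Eset_Skn[OF assms] by auto
  then show ?thesis
    using True biased_join_neq[OF True] by (simp add: averaged_join_def coefs)
next
  case False
  then have coef: "cone_coef (Ccone (Skn k n) Sle (Srank n) p q (kjoin p q)) = 1"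
    using Ccone_Skn_biased_join(1)[OF assms] biased_join_eq_kjoin[OF assms(1)]
    by (simp add: cone_coef_quadrant)
  then have "{u \<in> Eset (Skn k n) Sle (Srank n) p q. cone_coef (Ccone (Skn k n) Sle (Srank n) p q u) \<noteq> 0}
      = {kjoin p q}"
    using Eset_Skn[OF assms] biased_join_eq_kjoin[OF assms(1) False] by auto
  then show ?thesis
    using False by (simp add: averaged_join_def coef one_ereal_def[symmetric])
qed

lemma submodular_on_Skn_iff:
  "submodular_on (Skn k n) Sle (Srank n) f \<longleftrightarrow>
    (\<forall>p\<in>Skn k n. \<forall>q\<in>Skn k n. f (kmeet p q) + averaged_join f n p q \<le> f p + f q)"
  unfolding submodular_on_def by (simp add: glb_Skn submodular_sum_Skn cong: ball_cong)

lemma kmeet_kmeet_kjoin: "kmeet (kmeet q (kjoin p q)) p = kmeet p q"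
  unfolding kmeet_def kjoin_def by (auto simp: fun_eq_iff)

lemma kjoin_kmeet_kjoin: "kjoin (kmeet q (kjoin p q)) p = biased_join p q"
  unfolding kmeet_def kjoin_def biased_join_def by (auto simp: fun_eq_iff)

lemma kjoin_kjoin: "kjoin q (kjoin p q) = biased_join q p"
  unfolding kjoin_def biased_join_def by (auto simp: fun_eq_iff)

lemma kmeet_biased_joins: "kmeet (biased_join p q) (biased_join q p) = kjoin p q"
  unfolding kmeet_def kjoin_def biased_join_def by (auto simp: fun_eq_iff)

lemma biased_join_biased_joins: "biased_join (biased_join p q) (biased_join q p) = biased_join p q"
  unfolding biased_join_def by (auto simp: fun_eq_iff)

lemma has_conflict_biased_joins: "has_conflict n p q \<Longrightarrow> has_conflict n (biased_join p q) (biased_join q p)"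
  unfolding has_conflict_def biased_join_def by auto

text \<open>With \<open>r = q \<sqinter> (p \<squnion> q)\<close>, the instances at \<open>(r, p)\<close>, \<open>(p, q)\<close> and \<open>(q, p \<squnion> q)\<close> add up
  to twice the averaged inequality.\<close>

lemma averaged_join_le_if_k_submodular:
  assumes "k_submodular k n f" "\<forall>p\<in>Skn k n. f p \<noteq> -\<infinity>" "p \<in> Skn k n" "q \<in> Skn k n"
  shows "f (kmeet p q) + averaged_join f n p q \<le> f p + f q"
proof (cases "has_conflict n p q")
  case True
  define r where "r = kmeet q (kjoin p q)"
  have "kjoin p q \<in> Skn k n" "r \<in> Skn k n"
    using assms(3,4) by (simp_all add: r_def kjoin_Skn kmeet_Skn)
  then have chain: "f (kmeet p q) + f (biased_join p q) \<le> f r + f p"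
    "f (kmeet p q) + f (kjoin p q) \<le> f p + f q"
    "f r + f (biased_join q p) \<le> f q + f (kjoin p q)"
    using assms(1,3,4) unfolding k_submodular_def
    by (metis r_def kmeet_kmeet_kjoin kjoin_kmeet_kjoin kjoin_kjoin)+
  have finite_below: "f x \<noteq> -\<infinity>" if "x \<in> Skn k n" for x
    using assms(2) that by blast
  show ?thesis
    using ereal_average_le_of_chain[OF finite_below[OF assms(3)] finite_below[OF assms(4)]
        finite_below[OF kmeet_Skn[OF assms(3,4)]] finite_below[OF \<open>kjoin p q \<in> Skn k n\<close>]
        finite_below[OF \<open>r \<in> Skn k n\<close>] finite_below[OF biased_join_Skn[OF assms(3,4)]]
        finite_below[OF biased_join_Skn[OF assms(4,3)]] chain]
    using True by (simp add: averaged_join_def)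
qed (use assms in \<open>simp add: averaged_join_def k_submodular_def\<close>)

lemma k_submodular_if_averaged_join_le:
  assumes "\<forall>p\<in>Skn k n. \<forall>q\<in>Skn k n. f (kmeet p q) + averaged_join f n p q \<le> f p + f q"
    and "\<forall>p\<in>Skn k n. f p \<noteq> -\<infinity>"
  shows "k_submodular k n f"
  unfolding k_submodular_def
proof (intro ballI)
  fix p q assume p: "p \<in> Skn k n" and q: "q \<in> Skn k n"
  show "f (kmeet p q) + f (kjoin p q) \<le> f p + f q"
  proof (cases "has_conflict n p q")
    case True
    have joins: "biased_join p q \<in> Skn k n" "biased_join q p \<in> Skn k n"
      using p q by (simp_all add: biased_join_Skn)
    have "averaged_join f n (biased_join p q) (biased_join q p) = averaged_join f n p q"
      using True has_conflict_biased_joins[OF True]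
        biased_join_biased_joins[of p q] biased_join_biased_joins[of q p]
      by (simp add: averaged_join_def add.commute)
    then have upper: "f (kjoin p q) + averaged_join f n p q \<le> f (biased_join p q) + f (biased_join q p)"
      using assms(1) joins by (metis kmeet_biased_joins)
    have "f (kmeet p q) + averaged_join f n p q \<le> f p + f q"
      using assms(1) p q by blast
    moreover have finite_below: "f x \<noteq> -\<infinity>" if "x \<in> Skn k n" for x
      using assms(2) that by blast
    ultimately show ?thesis
      using ereal_le_of_average[OF finite_below[OF p] finite_below[OF q]
          finite_below[OF kmeet_Skn[OF p q]] finite_below[OF kjoin_Skn[OF p q]]
          finite_below[OF joins(1)] finite_below[OF joins(2)]] upper True
      by (simp add: averaged_join_def)
  next
    case False
    have "f (kmeet p q) + averaged_join f n p q \<le> f p + f q"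
      using assms(1) p q by blast
    then show ?thesis
      using False by (simp add: averaged_join_def)
  qed
qed

theorem theorem3p12:
  fixes k n :: nat and f :: "(nat \<Rightarrow> nat) \<Rightarrow> ereal"
  assumes "k \<ge> 2" and "n \<ge> 1"
    and "\<forall>p\<in>Skn k n. f p \<noteq> -\<infinity>"
  shows "k_submodular k n f \<longleftrightarrow> submodular_on (Skn k n) Sle (Srank n) f"
  unfolding submodular_on_Skn_iff
  using averaged_join_le_if_k_submodular k_submodular_if_averaged_join_le assms(3) by blast

end
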